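(* Let $q\in\mathbb{C}$ with $|q|<1$, $r\in\mathbb{N}$, $w_1,\dots,w_r>0$, $a_1,\dots,a_r\in\mathbb{C}$, $x\in\mathbb{C}$ with $\Re(x)>0$, and let $\chi$ be a Dirichlet character with conductor $f\in\mathbb{N}$, $f$ odd. Define $E_{n,\chi,q}^{(r)}(x|w_1,\dots,w_r;a_1,\dots,a_r)$ by $$2^r\sum_{m_1,\dots,m_r=0}^{\infty}\Big(\prod_{j=1}^r\chi(m_j)\Big)(-1)^{m_1+\cdots+m_r}q^{a_1m_1+\cdots+a_rm_r}e^{[x+\sum_{j=1}^r w_jm_j]_q t}=\sum_{n=0}^{\infty}E_{n,\chi,q}^{(r)}(x|w_1,\dots,w_r;a_1,\dots,a_r)\frac{t^n}{n!},$$ and the Barnes-type multiple $q$-$l$-function by $$l_{q,\chi}^{(r)}(s,x|w_1,\dots,w_r;a_1,\dots,a_r)=2^r\sum_{m_1,\dots,m_r=0}^{\infty}\frac{\Big(\prod_{j=1}^r\chi(m_j)\Big)(-1)^{m_1+\cdots+m_r}q^{m_1a_1+\cdots+m_ra_r}}{[x+w_1m_1+\cdots+w_rm_r]_q^s},\quad s\in\mathbb{C}$$ (extended meromorphically to the whole $s$-plane). Then for every integer $n\ge 0$, $$l_{q,\chi}^{(r)}(-n,x|w_1,\dots,w_r;a_1,\dots,a_r)=E_{n,\chi,q}^{(r)}(x|w_1,\dots,w_r;a_1,\dots,a_r).$$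
   Context: For complex $q$ with $|q|<1$, $[y]_q=\frac{1-q^y}{1-q}$, and $[y]_q^{s}$ denotes a complex power of $[y]_q$.
   Formalization: q is nonzero, $|q^{a_j}|<1$ for each j, $[x+w_1m_1+\cdots+w_rm_r]_q$ is nonzero for all $m_1,\dots,m_r$, and the continuation of l is taken as an entire function agreeing with the series on a nonempty open set. Apart from conventions, each condition added here is assumed in the paper as well or is needed for the statement above to hold. *)

theory Defs
  imports "HOL-Complex_Analysis.Complex_Analysis" "HOL-Number_Theory.Number_Theory"
begin

definition qint :: "complex \<Rightarrow> complex \<Rightarrow> complex" where
  "qint q y = (1 - q powr y) / (1 - q)"

definition dirichlet_character :: "nat \<Rightarrow> (nat \<Rightarrow> complex) \<Rightarrow> bool" where
  "dirichlet_character k chi \<longleftrightarrow> k > 0 \<and> chi 1 = 1 \<and>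
     (\<forall>m n. chi (m * n) = chi m * chi n) \<and>
     (\<forall>m. chi (m + k) = chi m) \<and>
     (\<forall>m. chi m = 0 \<longleftrightarrow> \<not> coprime m k)"

definition induced_modulus :: "nat \<Rightarrow> (nat \<Rightarrow> complex) \<Rightarrow> nat \<Rightarrow> bool" where
  "induced_modulus k chi d \<longleftrightarrow> d dvd k \<and>
     (\<forall>m n. coprime m k \<longrightarrow> coprime n k \<longrightarrow> [m = n] (mod d) \<longrightarrow> chi m = chi n)"

definition conductor :: "nat \<Rightarrow> (nat \<Rightarrow> complex) \<Rightarrow> nat" where
  "conductor k chi = (LEAST d. d > 0 \<and> induced_modulus k chi d)"

definition multi_idx :: "nat \<Rightarrow> (nat \<Rightarrow> nat) set" where
  "multi_idx r = {..<r} \<rightarrow>\<^sub>E (UNIV :: nat set)"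

definition barnes_coeff ::
  "complex \<Rightarrow> (nat \<Rightarrow> complex) \<Rightarrow> nat \<Rightarrow> (nat \<Rightarrow> complex) \<Rightarrow> (nat \<Rightarrow> nat) \<Rightarrow> complex" where
  "barnes_coeff q chi r a m = 2 ^ r * (\<Prod>j<r. chi (m j)) * (-1) ^ (\<Sum>j<r. m j)
      * q powr (\<Sum>j<r. a j * of_nat (m j))"

definition barnes_arg :: "complex \<Rightarrow> nat \<Rightarrow> (nat \<Rightarrow> real) \<Rightarrow> (nat \<Rightarrow> nat) \<Rightarrow> complex" where
  "barnes_arg x r w m = x + (\<Sum>j<r. complex_of_real (w j) * of_nat (m j))"

definition barnes_gen ::
  "complex \<Rightarrow> (nat \<Rightarrow> complex) \<Rightarrow> nat \<Rightarrow> (nat \<Rightarrow> real) \<Rightarrow> (nat \<Rightarrow> complex) \<Rightarrow> complex \<Rightarrow> complex \<Rightarrow> complex" where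
  "barnes_gen q chi r w a x t =
     infsum (\<lambda>m. barnes_coeff q chi r a m * exp (qint q (barnes_arg x r w m) * t)) (multi_idx r)"

definition barnes_l_series ::
  "complex \<Rightarrow> (nat \<Rightarrow> complex) \<Rightarrow> nat \<Rightarrow> (nat \<Rightarrow> real) \<Rightarrow> (nat \<Rightarrow> complex) \<Rightarrow> complex \<Rightarrow> complex \<Rightarrow> complex" where
  "barnes_l_series q chi r w a x s =
     infsum (\<lambda>m. barnes_coeff q chi r a m / (qint q (barnes_arg x r w m)) powr s) (multi_idx r)"

end

theory Submission
  imports Defs
begin

text \<open>Write \<open>c_m\<close> for the coefficients and \<open>z_m = [x + \<Sum>\<^sub>j w_j m_j]_q\<close>. The \<open>c_m\<close> are
  absolutely summable (geometric decay in each \<open>m_j\<close>) and the \<open>z_m\<close> are bounded, so the double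
  series \<open>\<Sum>\<^sub>m \<Sum>\<^sub>k c_m (z_m t)^k / k!\<close> may be summed in either order: \<open>E_n = \<Sum>\<^sub>m c_m z_m^n\<close>.
  Since \<open>z_m \<noteq> 0\<close> and \<open>z_m \<rightarrow> 1/(1 - q)\<close>, the \<open>z_m\<close> are also bounded away from 0, so \<open>Log z_m\<close> is
  bounded and the same exchange shows that \<open>\<Sum>\<^sub>m c_m exp (- s Log z_m)\<close> is entire. It agrees with
  the \<open>l\<close>-series, hence with \<open>L\<close>, on the open set \<open>S\<close>; by analytic continuation it equals \<open>L\<close>
  everywhere, and at \<open>s = -n\<close> it is \<open>\<Sum>\<^sub>m c_m z_m^n\<close>.\<close>

lemma exp_has_sum:
  fixes z :: "'a::{real_normed_field,banach}"
  shows "((\<lambda>k. z ^ k / fact k) has_sum exp z) UNIV"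
proof -
  have "((\<lambda>k. z ^ k /\<^sub>R fact k) has_sum exp z) UNIV"
    by (rule norm_summable_imp_has_sum[OF summable_norm_exp exp_converges])
  then show ?thesis
    by (simp add: scaleR_conv_of_real divide_inverse mult.commute)
qed

lemma abs_summable_on_mult_power:
  fixes c u :: "'i \<Rightarrow> 'a::real_normed_div_algebra"
  assumes c: "(\<lambda>m. norm (c m)) summable_on M" and u: "\<And>m. m \<in> M \<Longrightarrow> norm (u m) \<le> B"
  shows "(\<lambda>m. norm (c m * u m ^ k)) summable_on M"
proof (rule Infinite_Sum.abs_summable_on_comparison_test)
  show "(\<lambda>m. norm (norm (c m) * \<bar>B\<bar> ^ k)) summable_on M"
    using c by (auto simp: abs_mult power_abs intro: summable_on_cmult_left)
  fix m assume "m \<in> M"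
  then have "norm (u m) ^ k \<le> \<bar>B\<bar> ^ k" using u[of m] by (intro power_mono) auto
  then show "norm (c m * u m ^ k) \<le> norm (norm (c m) * \<bar>B\<bar> ^ k)"
    by (simp add: norm_mult norm_power mult_left_mono abs_mult power_abs)
qed

lemma sums_infsum_mult_exp:
  fixes c u :: "'i \<Rightarrow> complex"
  assumes c: "(\<lambda>m. norm (c m)) summable_on M" and u: "\<And>m. m \<in> M \<Longrightarrow> norm (u m) \<le> B"
  shows "(\<lambda>k. infsum (\<lambda>m. c m * u m ^ k) M / fact k * t ^ k) sums
           infsum (\<lambda>m. c m * exp (u m * t)) M"
proof -
  define F where "F = (\<lambda>(m,k). c m * ((u m * t) ^ k / fact k))"
  have nF: "norm (F (m,k)) = norm (c m) * (norm (u m * t) ^ k / fact k)" for m k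
    by (simp add: F_def norm_mult norm_divide norm_power)
  have "(\<lambda>p. norm (F p)) summable_on (M \<times> UNIV)"
  proof (rule iffD2[OF Infinite_Sum.abs_summable_on_Sigma_iff], intro conjI ballI)
    fix m
    show "(\<lambda>k. norm (F (m, k))) summable_on UNIV"
      unfolding nF using exp_has_sum[of "norm (u m * t)"]
      by (intro summable_on_cmult_right) (auto simp: summable_on_def)
  next
    show "(\<lambda>m. norm (infsum (\<lambda>k. norm (F (m, k))) UNIV)) summable_on M"
    proof (rule Infinite_Sum.abs_summable_on_comparison_test)
      show "(\<lambda>m. norm (norm (c m) * exp (B * norm t))) summable_on M"
        using c by (auto intro: summable_on_cmult_left)
      fix m assume "m \<in> M"
      then have "exp (norm (u m * t)) \<le> exp (B * norm t)"
        using u by (simp add: norm_mult mult_right_mono)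
      moreover have "infsum (\<lambda>k. norm (F (m, k))) UNIV = norm (c m) * exp (norm (u m * t))"
        unfolding nF by (rule infsumI[OF has_sum_cmult_right[OF exp_has_sum]])
      ultimately show "norm (infsum (\<lambda>k. norm (F (m, k))) UNIV) \<le> norm (norm (c m) * exp (B * norm t))"
        by (simp add: mult_left_mono)
    qed
  qed
  then have F: "(F has_sum infsum F (M \<times> UNIV)) (M \<times> UNIV)"
    by (simp add: abs_summable_summable)
  have "((\<lambda>m. c m * exp (u m * t)) has_sum infsum F (M \<times> UNIV)) M"
  proof (rule has_sum_SigmaD[OF F])
    fix m
    show "((\<lambda>k. F (m, k)) has_sum c m * exp (u m * t)) UNIV"
      unfolding F_def using has_sum_cmult_right[OF exp_has_sum, of "c m"] by simp
  qed
  moreover have "((\<lambda>k. infsum (\<lambda>m. c m * u m ^ k) M / fact k * t ^ k) has_sum infsum F (M \<times> UNIV)) UNIV"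
  proof (rule has_sum_SigmaD)
    show "((\<lambda>(k, m). F (m, k)) has_sum infsum F (M \<times> UNIV)) (UNIV \<times> M)"
      using F has_sum_swap[of F] by (simp add: case_prod_unfold)
    fix k :: nat
    have "(\<lambda>m. c m * u m ^ k) summable_on M"
      using abs_summable_on_mult_power[OF c u] by (rule abs_summable_summable)
    from has_sum_cmult_left[OF this[THEN summable_iff_has_sum_infsum[THEN iffD1]], of "t ^ k / fact k"]
    show "((\<lambda>m. (\<lambda>(k, m). F (m, k)) (k, m)) has_sum infsum (\<lambda>m. c m * u m ^ k) M / fact k * t ^ k) M"
      by (simp add: F_def power_mult_distrib mult.assoc)
  qed
  ultimately show ?thesis by (simp add: has_sum_imp_sums infsumI)
qed

lemma power_series_coeffs_unique:
  fixes a b :: "nat \<Rightarrow> complex"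
  assumes "\<forall>\<^sub>F t in nhds 0. (\<lambda>k. a k * t ^ k) sums g t"
    and "\<forall>\<^sub>F t in nhds 0. (\<lambda>k. b k * t ^ k) sums g t"
  shows "a = b"
proof
  fix n
  obtain e where e: "e > 0"
    and ab: "\<And>t. norm t < e \<Longrightarrow> (\<lambda>k. a k * t ^ k) sums g t \<and> (\<lambda>k. b k * t ^ k) sums g t"
    using eventually_conj[OF assms] unfolding eventually_nhds_metric by (auto simp: dist_norm)
  define d where "d k = a k - b k" for k
  have d: "(\<lambda>k. d k * t ^ k) sums 0" if "norm t < e" for t
    using sums_diff[of "\<lambda>k. a k * t ^ k" "g t" "\<lambda>k. b k * t ^ k" "g t"] ab[OF that]
    by (simp add: d_def algebra_simps)
  have "d 0 = 0"
    using d[of 0] e by simp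
  show "a n = b n"
  proof (rule ccontr)
    assume "a n \<noteq> b n"
    then have "d n \<noteq> 0" by (simp add: d_def)
    with \<open>d 0 = 0\<close> have "n > 0" by (cases n) auto
    show False
    proof (rule powser_0_nonzero[of e 0 d "\<lambda>_. 0" n])
      fix s :: real
      assume s: "0 < s" "\<And>z::complex. z \<in> cball 0 s - {0} \<Longrightarrow> 0 \<noteq> 0"
      have "complex_of_real s \<in> cball 0 s - {0}" using s(1) by auto
      then show False using s(2) by blast
    qed (use e d \<open>d n \<noteq> 0\<close> \<open>n > 0\<close> in auto)
  qed
qed

lemma holomorphic_infsum_mult_exp:
  fixes c u :: "'i \<Rightarrow> complex"
  assumes c: "(\<lambda>m. norm (c m)) summable_on M" and u: "\<And>m. m \<in> M \<Longrightarrow> norm (u m) \<le> B"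
  shows "(\<lambda>s. infsum (\<lambda>m. c m * exp (u m * s)) M) holomorphic_on UNIV"
  unfolding holomorphic_on_def
proof
  fix s :: complex
  let ?F = "\<lambda>s. infsum (\<lambda>m. c m * exp (u m * s)) M"
  have "?F holomorphic_on ball 0 R" for R
  proof (rule power_series_holomorphic)
    fix t :: complex
    show "(\<lambda>k. infsum (\<lambda>m. c m * u m ^ k) M / fact k * (t - 0) ^ k) sums ?F t"
      using sums_infsum_mult_exp[of c M u, OF c u] by simp
  qed
  then have "?F field_differentiable at s"
    by (rule holomorphic_on_imp_differentiable_at[of _ "ball 0 (norm s + 1)"]) auto
  then show "?F field_differentiable at s within UNIV" by simp
qed

lemma norm_Ln_le:
  fixes z :: complex
  assumes "0 < d" "d \<le> norm z" "norm z \<le> Z"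
  shows "norm (Ln z) \<le> \<bar>ln d\<bar> + \<bar>ln Z\<bar> + pi"
proof -
  have "z \<noteq> 0" using assms by auto
  have "norm (Ln z) \<le> \<bar>Re (Ln z)\<bar> + \<bar>Im (Ln z)\<bar>" by (rule cmod_le)
  also have "\<bar>Im (Ln z)\<bar> \<le> pi" using mpi_less_Im_Ln[OF \<open>z \<noteq> 0\<close>] Im_Ln_le_pi[OF \<open>z \<noteq> 0\<close>] by auto
  also have "\<bar>Re (Ln z)\<bar> = \<bar>ln (norm z)\<bar>" using \<open>z \<noteq> 0\<close> by (simp add: Re_Ln)
  also have "\<bar>ln (norm z)\<bar> \<le> \<bar>ln d\<bar> + \<bar>ln Z\<bar>"
  proof -
    have "ln d \<le> ln (norm z)" "ln (norm z) \<le> ln Z"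
      using assms by (simp_all add: \<open>z \<noteq> 0\<close>)
    then show ?thesis by linarith
  qed
  finally show ?thesis by simp
qed

lemma powr_sum_mult_of_nat:
  fixes q :: complex
  assumes "q \<noteq> 0" "finite A"
  shows "q powr (\<Sum>j\<in>A. a j * of_nat (m j)) = (\<Prod>j\<in>A. (q powr a j) ^ m j)"
proof -
  have "q powr (\<Sum>j\<in>A. a j * of_nat (m j)) = (\<Prod>j\<in>A. exp (of_nat (m j) * (a j * Ln q)))"
    using assms by (simp add: powr_def sum_distrib_left exp_sum mult_ac)
  also have "\<dots> = (\<Prod>j\<in>A. (q powr a j) ^ m j)"
    using assms by (simp add: powr_def exp_of_nat_mult)
  finally show ?thesis .
qed

lemma prod_power_summable_on_multi_idx:
  fixes \<rho> :: "nat \<Rightarrow> real"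
  assumes \<rho>: "\<And>j. j < r \<Longrightarrow> 0 \<le> \<rho> j \<and> \<rho> j < 1"
  shows "(\<lambda>m. \<Prod>j<r. \<rho> j ^ m j) summable_on multi_idx r"
proof -
  have geo: "((\<lambda>k. \<rho> j ^ k) has_sum 1 / (1 - \<rho> j)) UNIV" if "j < r" for j
    using geometric_sums[of "\<rho> j"] \<rho>[OF that] by (intro sums_nonneg_imp_has_sum) auto
  have "infsum (\<lambda>m. \<Prod>j<r. \<rho> j ^ m j) (multi_idx r) = (\<Prod>j<r. infsum (\<lambda>k. \<rho> j ^ k) UNIV)"
    unfolding multi_idx_def
    by (rule infsum_prod_PiE_abs) (use geo \<rho> in \<open>auto simp: summable_on_def\<close>)
  also have "\<dots> = (\<Prod>j<r. 1 / (1 - \<rho> j))"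
    using geo by (intro prod.cong refl) (auto intro: infsumI)
  also have "\<dots> > 0"
    using \<rho> by (intro prod_pos) auto
  \<comment> \<open>a family that is not summable has \<open>infsum\<close> 0\<close>
  finally show ?thesis
    using infsum_not_exists by force
qed

lemma dirichlet_character_mod:
  assumes "dirichlet_character k chi"
  shows "chi (n mod k) = chi n"
proof -
  from assms have per: "chi (m + k) = chi m" for m
    by (simp add: dirichlet_character_def)
  have "chi (i + j * k) = chi i" for i j
  proof (induction j)
    case (Suc j)
    have "chi (i + Suc j * k) = chi ((i + j * k) + k)" by (simp add: algebra_simps)
    then show ?case using Suc per by simp
  qed simp
  from this[of "n mod k" "n div k"] show ?thesis
    by (simp add: mod_div_mult_eq)
qed

lemma dirichlet_character_norm_le:
  assumes "dirichlet_character k chi"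
  shows "norm (chi n) \<le> (\<Sum>i<k. norm (chi i))"
proof -
  have "k > 0" using assms by (simp add: dirichlet_character_def)
  then have "norm (chi (n mod k)) \<le> (\<Sum>i<k. norm (chi i))"
    by (intro member_le_sum) auto
  then show ?thesis
    using dirichlet_character_mod[OF assms] by simp
qed

lemma barnes_coeff_abs_summable:
  assumes q: "q \<noteq> 0" and conv: "\<forall>j<r. norm (q powr a j) < 1"
    and chi: "dirichlet_character f chi"
  shows "(\<lambda>m. norm (barnes_coeff q chi r a m)) summable_on multi_idx r"
proof -
  define B where "B = (\<Sum>i<f. norm (chi i))"
  define \<rho> where "\<rho> j = norm (q powr a j)" for j
  define G where "G m = 2 ^ r * B ^ r * (\<Prod>j<r. \<rho> j ^ m j)" for m :: "nat \<Rightarrow> nat"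
  have "B \<ge> 0" by (simp add: B_def sum_nonneg)
  have "G summable_on multi_idx r"
    unfolding G_def using conv
    by (intro summable_on_cmult_right prod_power_summable_on_multi_idx) (auto simp: \<rho>_def)
  moreover have "G m \<ge> 0" for m
    using \<open>B \<ge> 0\<close> by (simp add: G_def \<rho>_def prod_nonneg)
  ultimately have "(\<lambda>m. norm (G m)) summable_on multi_idx r"
    by simp
  then show ?thesis
  proof (rule Infinite_Sum.abs_summable_on_comparison_test)
    fix m
    have "(\<Prod>j<r. norm (chi (m j))) \<le> (\<Prod>j<r. B)"
      using dirichlet_character_norm_le[OF chi] by (intro prod_mono) (simp add: B_def)
    then have "norm (barnes_coeff q chi r a m) \<le> G m"
      by (simp add: barnes_coeff_def G_def powr_sum_mult_of_nat[OF q] norm_mult norm_power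
          prod_norm[symmetric] \<rho>_def mult_right_mono prod_nonneg)
    then show "norm (barnes_coeff q chi r a m) \<le> norm (G m)" by simp
  qed
qed

lemma norm_powr_barnes_arg:
  "norm (q powr barnes_arg x r w m)
     = norm q powr (Re x + (\<Sum>j<r. w j * real (m j))) * exp (- Im x * Arg q)"
  by (simp add: norm_powr_complex barnes_arg_def Re_sum Im_sum)

lemma norm_qint_barnes_arg_le:
  assumes q: "norm q < 1" "q \<noteq> 0" and w: "\<forall>j<r. w j \<ge> 0" and x: "Re x \<ge> 0"
  shows "norm (qint q (barnes_arg x r w m)) \<le> (1 + exp (- Im x * Arg q)) / norm (1 - q)"
proof -
  have "Re x + (\<Sum>j<r. w j * real (m j)) \<ge> 0"
    using w x by (auto intro!: sum_nonneg add_nonneg_nonneg)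
  then have "norm q powr (Re x + (\<Sum>j<r. w j * real (m j))) \<le> norm q powr 0"
    using q by (intro powr_mono') auto
  then have "norm (q powr barnes_arg x r w m) \<le> exp (- Im x * Arg q)"
    using q by (simp add: norm_powr_barnes_arg)
  then have "norm (1 - q powr barnes_arg x r w m) \<le> 1 + exp (- Im x * Arg q)"
    using norm_triangle_ineq4[of 1 "q powr barnes_arg x r w m"] by simp
  moreover have "norm (1 - q) > 0" using q by auto
  ultimately show ?thesis
    by (simp add: qint_def norm_divide divide_right_mono)
qed

lemma finite_multi_idx_weighted_less:
  assumes w: "\<forall>j<r. w j > 0"
  shows "finite {m \<in> multi_idx r. (\<Sum>j<r. w j * real (m j)) < T}"
proof (rule finite_subset)
  show "finite (PiE {..<r} (\<lambda>j. {..nat \<lceil>T / w j\<rceil>}))" by (simp add: finite_PiE)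
  show "{m \<in> multi_idx r. (\<Sum>j<r. w j * real (m j)) < T} \<subseteq> PiE {..<r} (\<lambda>j. {..nat \<lceil>T / w j\<rceil>})"
  proof
    fix m assume m: "m \<in> {m \<in> multi_idx r. (\<Sum>j<r. w j * real (m j)) < T}"
    have "m j \<le> nat \<lceil>T / w j\<rceil>" if j: "j < r" for j
    proof -
      have "w j * real (m j) \<le> (\<Sum>j<r. w j * real (m j))"
        using j w by (intro member_le_sum) auto
      also have "\<dots> < T" using m by simp
      finally have "real (m j) < T / w j" using w j by (simp add: pos_less_divide_eq mult.commute)
      then show ?thesis by linarith
    qed
    then show "m \<in> PiE {..<r} (\<lambda>j. {..nat \<lceil>T / w j\<rceil>})"
      using m by (auto simp: multi_idx_def PiE_iff)
  qed
qed

lemma qint_barnes_arg_bounded_below: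
  assumes q: "norm q < 1" "q \<noteq> 0" and w: "\<forall>j<r. w j > 0"
    and nz: "\<forall>m\<in>multi_idx r. qint q (barnes_arg x r w m) \<noteq> 0"
  obtains d where "d > 0" "\<And>m. m \<in> multi_idx r \<Longrightarrow> d \<le> norm (qint q (barnes_arg x r w m))"
proof -
  define z where "z m = qint q (barnes_arg x r w m)" for m
  define K where "K = exp (- Im x * Arg q)"
  define T where "T = ln (1 / (2 * K)) / ln (norm q)"
  have "norm (1 - q) > 0" using q by auto
  \<comment> \<open>\<open>K |q|^T = 1/2\<close>, so beyond \<open>T\<close> we have \<open>|q^y| \<le> 1/2\<close> and \<open>|[y]_q| \<ge> 1/(2 |1 - q|)\<close>\<close>
  have far: "1 / (2 * norm (1 - q)) \<le> norm (z m)"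
    if "T - Re x \<le> (\<Sum>j<r. w j * real (m j))" for m
  proof -
    have "norm q powr (Re x + (\<Sum>j<r. w j * real (m j))) \<le> norm q powr T"
      using that q by (intro powr_mono') auto
    also have "norm q powr T = 1 / (2 * K)"
      using q by (simp add: powr_def T_def K_def)
    finally have "norm (q powr barnes_arg x r w m) \<le> 1 / 2"
      by (simp add: norm_powr_barnes_arg K_def field_simps)
    then have "norm (1 - q powr barnes_arg x r w m) \<ge> 1 / 2"
      using norm_triangle_ineq2[of 1 "q powr barnes_arg x r w m"] by simp
    then show ?thesis
      using \<open>norm (1 - q) > 0\<close> by (simp add: z_def qint_def norm_divide field_simps)
  qed
  define small where "small = {m \<in> multi_idx r. (\<Sum>j<r. w j * real (m j)) < T - Re x}"
  have "finite small"
    unfolding small_def by (rule finite_multi_idx_weighted_less[OF w])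
  define d where "d = Min (insert (1 / (2 * norm (1 - q))) ((\<lambda>m. norm (z m)) ` small))"
  show ?thesis
  proof
    show "d > 0"
      unfolding d_def using \<open>finite small\<close> \<open>norm (1 - q) > 0\<close> nz
      by (subst Min_gr_iff) (auto simp: small_def z_def)
    fix m assume "m \<in> multi_idx r"
    then show "d \<le> norm (qint q (barnes_arg x r w m))"
      using far[of m] \<open>finite small\<close> unfolding d_def z_def[symmetric]
      by (cases "m \<in> small") (auto simp: small_def intro: Min.coboundedI order_trans[OF Min.coboundedI])
  qed
qed

definition barnes_moment ::
  "complex \<Rightarrow> (nat \<Rightarrow> complex) \<Rightarrow> nat \<Rightarrow> (nat \<Rightarrow> real) \<Rightarrow> (nat \<Rightarrow> complex) \<Rightarrow> complex \<Rightarrow> nat \<Rightarrow> complex" where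
  "barnes_moment q chi r w a x k =
     infsum (\<lambda>m. barnes_coeff q chi r a m * qint q (barnes_arg x r w m) ^ k) (multi_idx r)"

lemma barnes_gen_sums_moments:
  assumes q: "norm q < 1" "q \<noteq> 0" and w: "\<forall>j<r. w j > 0" and x: "Re x > 0"
    and conv: "\<forall>j<r. norm (q powr a j) < 1" and chi: "dirichlet_character f chi"
  shows "(\<lambda>k. barnes_moment q chi r w a x k / fact k * t ^ k) sums barnes_gen q chi r w a x t"
  unfolding barnes_moment_def barnes_gen_def
  by (rule sums_infsum_mult_exp[OF barnes_coeff_abs_summable[OF q(2) conv chi]
        norm_qint_barnes_arg_le[OF q]]) (use w x in auto)

lemma barnes_l_series_eq_infsum_exp:
  assumes nz: "\<forall>m\<in>multi_idx r. qint q (barnes_arg x r w m) \<noteq> 0"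
  shows "barnes_l_series q chi r w a x s =
    infsum (\<lambda>m. barnes_coeff q chi r a m * exp (- Ln (qint q (barnes_arg x r w m)) * s)) (multi_idx r)"
  unfolding barnes_l_series_def
  by (rule infsum_cong) (use nz in \<open>simp add: powr_def exp_minus divide_inverse mult.commute\<close>)

lemma barnes_l_continuation_at_neg_nat:
  assumes q: "norm q < 1" "q \<noteq> 0" and w: "\<forall>j<r. w j > 0" and x: "Re x > 0"
    and conv: "\<forall>j<r. norm (q powr a j) < 1"
    and nz: "\<forall>m\<in>multi_idx r. qint q (barnes_arg x r w m) \<noteq> 0"
    and chi: "dirichlet_character f chi"
    and L: "L holomorphic_on UNIV" "open S" "S \<noteq> {}"
           "\<forall>s\<in>S. L s = barnes_l_series q chi r w a x s"
  shows "L (- of_nat n) = barnes_moment q chi r w a x n"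
proof -
  define z where "z m = qint q (barnes_arg x r w m)" for m
  define F where "F s = infsum (\<lambda>m. barnes_coeff q chi r a m * exp (- Ln (z m) * s)) (multi_idx r)" for s
  obtain d where d: "d > 0" "\<And>m. m \<in> multi_idx r \<Longrightarrow> d \<le> norm (z m)"
    using qint_barnes_arg_bounded_below[OF q w nz] unfolding z_def by blast
  define Z where "Z = (1 + exp (- Im x * Arg q)) / norm (1 - q)"
  have "norm (z m) \<le> Z" for m
    unfolding z_def Z_def using w x by (intro norm_qint_barnes_arg_le[OF q]) auto
  then have "norm (- Ln (z m)) \<le> \<bar>ln d\<bar> + \<bar>ln Z\<bar> + pi" if "m \<in> multi_idx r" for m
    using norm_Ln_le[OF d(1) d(2)[OF that]] by simp
  then have hol: "F holomorphic_on UNIV"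
    unfolding F_def
    by (rule holomorphic_infsum_mult_exp[OF barnes_coeff_abs_summable[OF q(2) conv chi]])
  have agree: "L s = F s" if "s \<in> S" for s
    using L(4) that barnes_l_series_eq_infsum_exp[OF nz] by (simp add: F_def z_def)
  have "L (- of_nat n) = F (- of_nat n)"
    by (rule analytic_continuation_open[of S UNIV L F]) (use L(1-3) hol agree in auto)
  also have "\<dots> = barnes_moment q chi r w a x n"
    unfolding F_def barnes_moment_def
    by (rule infsum_cong) (use nz in \<open>simp add: z_def exp_Ln exp_of_nat2_mult\<close>)
  finally show ?thesis .
qed

theorem theorem8:
  fixes q x :: complex and r f n :: nat and w :: "nat \<Rightarrow> real" and a :: "nat \<Rightarrow> complex"
    and chi :: "nat \<Rightarrow> complex" and E :: "nat \<Rightarrow> complex" and L :: "complex \<Rightarrow> complex"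
    and S :: "complex set"
  assumes q: "norm q < 1" "q \<noteq> 0"
    and w: "\<forall>j<r. w j > 0"
    and x: "Re x > 0"
    and conv: "\<forall>j<r. norm (q powr a j) < 1"
    and nz: "\<forall>m\<in>multi_idx r. qint q (barnes_arg x r w m) \<noteq> 0"
    and hchi: "dirichlet_character f chi" "conductor f chi = f" "odd f"
    and E: "\<forall>\<^sub>F t in nhds 0. (\<lambda>k. E k * t ^ k / fact k) sums barnes_gen q chi r w a x t"
    and L: "L holomorphic_on UNIV" "open S" "S \<noteq> {}"
           "\<forall>s\<in>S. L s = barnes_l_series q chi r w a x s"
  shows "L (- of_nat n) = E n"
proof -
  have "(\<lambda>k. E k / fact k) = (\<lambda>k. barnes_moment q chi r w a x k / fact k)"
  proof (rule power_series_coeffs_unique)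
    show "\<forall>\<^sub>F t in nhds 0. (\<lambda>k. E k / fact k * t ^ k) sums barnes_gen q chi r w a x t"
      using E by eventually_elim (simp add: field_simps)
    show "\<forall>\<^sub>F t in nhds 0. (\<lambda>k. barnes_moment q chi r w a x k / fact k * t ^ k) sums barnes_gen q chi r w a x t"
      using barnes_gen_sums_moments[OF q w x conv hchi(1)] by simp
  qed
  then have "E n = barnes_moment q chi r w a x n"
    by (metis fact_nonzero divide_cancel_right)
  then show ?thesis
    using barnes_l_continuation_at_neg_nat[OF q w x conv nz hchi(1) L] by simp
qed

end
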